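(* Let $n\geq 2$, $a>1$, and let $u'':[1,a]\to[0,\infty)$ satisfy $u''(x)\geq k(x-1)(a-x)$ on $[1,a]$ for a constant $k>0$. Let $1<b_\infty<b_0<a$ be constants and suppose $b:[0,T)\to\mathbb{R}$ solves the initial value problem $b(0)=b_0$, $$\dot b=-\frac{k\,b_\infty(b_\infty-1)(a^2-b_0^2)(b-b_\infty)b^3}{a(a^2-b_\infty^2)(2a^2-b_\infty^2)^2}.$$ Then $$g_t(y):=\sqrt{\frac{a^2-b^2}{a^2-b_\infty^2}y^2+b^2},\qquad b=b(t),$$ is a sub-solution of the equation $$\dot h=u''(h(y))\left(\frac{h''}{1+h'^2}+(n-1)\frac{yh'-h}{y^2+h^2}\right)$$ for $y\in\left[-\sqrt{a^2-b_\infty^2},\sqrt{a^2-b_\infty^2}\right]$, in the sense that $\dot g_t-u''(g_t)\left(\frac{g_t''}{1+g_t'^2}+(n-1)\frac{yg_t'-g_t}{y^2+g_t^2}\right)\geq 0$ there.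
   Context: Dots denote $t$-derivatives and primes denote $y$-derivatives. The function $u''$ comes from a Calabi-symmetric K\"ahler form on the blowup of $\mathbb{P}^n$ at a point, expressed in the Legendre coordinate $x\in[1,a]$. *)

theory Defs
  imports "HOL-Analysis.Analysis"
begin

definition gsub :: "real \<Rightarrow> real \<Rightarrow> real \<Rightarrow> real \<Rightarrow> real" where
  "gsub a binf bt y = sqrt ((a\<^sup>2 - bt\<^sup>2) / (a\<^sup>2 - binf\<^sup>2) * y\<^sup>2 + bt\<^sup>2)"

definition bode_rhs :: "real \<Rightarrow> real \<Rightarrow> real \<Rightarrow> real \<Rightarrow> real \<Rightarrow> real" where
  "bode_rhs k a b0 binf bt =
     - (k * binf * (binf - 1) * (a\<^sup>2 - b0\<^sup>2) * (bt - binf) * bt ^ 3)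
       / (a * (a\<^sup>2 - binf\<^sup>2) * (2 * a\<^sup>2 - binf\<^sup>2)\<^sup>2)"

end

theory Submission
  imports Defs
begin

(* Write C for the rate constant of the ODE, b' = -C (b - binf) b^3, and
   c = (a^2 - b^2) / (a^2 - binf^2), so that g = sqrt (c y^2 + b^2), g' = c y / g and
   g'' = c b^2 / g^3. The ODE is linear in b - binf with nonnegative coefficient C b^3, so b stays
   in (binf, b0]; hence 0 <= c < 1 and b <= g <= a for y^2 <= a^2 - binf^2. The curvature operator
   is then at most -(1 - c) b^4 / (g P Q), where P = g^2 + c^2 y^2 <= Q = y^2 + g^2 <= 2 a^2 - binf^2
   and 1 - c = (b - binf)(b + binf) / (a^2 - binf^2). So with u''(g) >= k (g - 1)(a - g), minus
   u''(g) times the operator is at least k (g - 1)(a - g)(b - binf)(b + binf) b^4 / ((a^2 - binf^2) g P Q),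
   which dominates -g_t = C (1 - y^2 / (a^2 - binf^2)) (b - binf) b^4 / g: the value of C is chosen
   exactly for this. *)

lemma has_real_derivative_unique_within_Ico:
  fixes f :: "real \<Rightarrow> real"
  assumes "(f has_real_derivative D) (at t within {a..<b})"
    and "(f has_real_derivative E) (at t within {a..<b})"
    and "t \<in> {a..<b}"
  shows "D = E"
proof (rule has_field_derivative_unique[OF assms(1,2)])
  show "at t within {a..<b} \<noteq> bot"
    using assms(3) by (auto simp: trivial_limit_within)
qed

lemma linear_ode_solution_eq:
  fixes b q :: "real \<Rightarrow> real"
  assumes q_cont: "continuous_on {0..<T} q"
    and ode: "\<forall>s\<in>{0..<T}. (b has_real_derivative - q s * (b s - c)) (at s within {0..<T})"
    and t: "t \<in> {0..<T}"
  shows "b t - c = (b 0 - c) * exp (- integral {0..t} q)"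
proof -
  have sub: "{0..t} \<subseteq> {0..<T}" using t by auto
  have db: "(b has_real_derivative - q s * (b s - c)) (at s within {0..t})" if "s \<in> {0..t}" for s
    using ode sub that by (meson has_field_derivative_subset subsetD)
  have dI: "((\<lambda>s. integral {0..s} q) has_real_derivative q s) (at s within {0..t})" if "s \<in> {0..t}" for s
    using integral_has_real_derivative continuous_on_subset[OF q_cont sub] that .
  define w where "w s = (b s - c) * exp (integral {0..s} q)" for s
  have "(w has_real_derivative 0) (at s within {0..t})" if "s \<in> {0..t}" for s
    unfolding w_def
    by (rule derivative_eq_intros db[OF that] dI[OF that] refl | simp add: algebra_simps)+
  then obtain w0 where "\<forall>s\<in>{0..t}. w s = w0"
    using has_field_derivative_zero_constant[of "{0..t}" w] by auto
  then have "w t = w 0" using t by auto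
  then show ?thesis by (simp add: w_def exp_minus field_simps)
qed

definition bode_rate :: "real \<Rightarrow> real \<Rightarrow> real \<Rightarrow> real \<Rightarrow> real" where
  "bode_rate k a b0 binf =
     k * binf * (binf - 1) * (a\<^sup>2 - b0\<^sup>2) / (a * (a\<^sup>2 - binf\<^sup>2) * (2 * a\<^sup>2 - binf\<^sup>2)\<^sup>2)"

lemma bode_rhs_eq_rate: "bode_rhs k a b0 binf x = - bode_rate k a b0 binf * (x - binf) * x ^ 3"
  by (simp add: bode_rhs_def bode_rate_def)

lemma bode_rate_nonneg:
  assumes "0 \<le> k" "1 \<le> binf" "binf < a" "b0 \<le> a" "0 \<le> b0"
  shows "0 \<le> bode_rate k a b0 binf"
proof -
  have "binf\<^sup>2 < a\<^sup>2" "b0\<^sup>2 \<le> a\<^sup>2"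
    using assms by (auto intro: power_strict_mono power_mono)
  then show ?thesis
    using assms unfolding bode_rate_def by (auto intro!: divide_nonneg_pos)
qed

lemma bode_solution_bounds:
  fixes b :: "real \<Rightarrow> real"
  assumes "0 \<le> k" "1 < binf" "binf < b0" "b0 < a" "b 0 = b0"
    and ode: "\<forall>s\<in>{0..<T}. (b has_real_derivative bode_rhs k a b0 binf (b s)) (at s within {0..<T})"
    and t: "t \<in> {0..<T}"
  shows "binf < b t" "b t \<le> b0"
proof -
  define q where "q s = bode_rate k a b0 binf * b s ^ 3" for s
  have q_cont: "continuous_on {0..<T} q"
    unfolding q_def using ode
    by (intro continuous_intros)
       (meson DERIV_continuous continuous_on_eq_continuous_within)
  have ode_q: "\<forall>s\<in>{0..<T}. (b has_real_derivative - q s * (b s - binf)) (at s within {0..<T})"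
    using ode by (simp add: q_def bode_rhs_eq_rate mult_ac)
  have above: "binf < b s" if "s \<in> {0..<T}" for s
  proof -
    have "0 < (b0 - binf) * exp (- integral {0..s} q)" using assms(3) by simp
    then show ?thesis using linear_ode_solution_eq[OF q_cont ode_q that] assms(5) by simp
  qed
  then show "binf < b t" using t .
  have q_nonneg: "0 \<le> q s" if "s \<in> {0..t}" for s
    using that t above[of s] assms bode_rate_nonneg[of k binf a b0] by (simp add: q_def)
  have "continuous_on {0..t} q"
    by (rule continuous_on_subset[OF q_cont]) (use t in auto)
  then have "0 \<le> integral {0..t} q"
    by (rule integral_nonneg[OF integrable_continuous_interval q_nonneg])
  then have "(b0 - binf) * exp (- integral {0..t} q) \<le> b0 - binf"
    using assms(3) by (simp add: mult_le_cancel_left1)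
  then show "b t \<le> b0"
    using linear_ode_solution_eq[OF q_cont ode_q t] assms(5) by simp
qed

lemma sqrt_quadratic_has_derivative:
  fixes c \<beta> z :: real
  assumes "0 \<le> c" "\<beta> \<noteq> 0"
  shows "((\<lambda>z. sqrt (c * z\<^sup>2 + \<beta>\<^sup>2)) has_real_derivative c * z / sqrt (c * z\<^sup>2 + \<beta>\<^sup>2)) (at z)"
proof -
  have "0 < c * z\<^sup>2 + \<beta>\<^sup>2" using assms by (simp add: add_nonneg_pos)
  then show ?thesis by (auto intro!: derivative_eq_intros simp: field_simps)
qed

lemma sqrt_quadratic_deriv:
  fixes c \<beta> :: real
  assumes "0 \<le> c" "\<beta> \<noteq> 0"
  shows "deriv (\<lambda>z. sqrt (c * z\<^sup>2 + \<beta>\<^sup>2)) = (\<lambda>z. c * z / sqrt (c * z\<^sup>2 + \<beta>\<^sup>2))"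
  using DERIV_imp_deriv[OF sqrt_quadratic_has_derivative[OF assms]] by blast

lemma sqrt_quadratic_has_second_derivative:
  fixes c \<beta> z :: real
  assumes "0 \<le> c" "\<beta> \<noteq> 0"
  shows "((\<lambda>z. c * z / sqrt (c * z\<^sup>2 + \<beta>\<^sup>2)) has_real_derivative c * \<beta>\<^sup>2 / sqrt (c * z\<^sup>2 + \<beta>\<^sup>2) ^ 3) (at z)"
proof -
  define g where "g = sqrt (c * z\<^sup>2 + \<beta>\<^sup>2)"
  have "0 < c * z\<^sup>2 + \<beta>\<^sup>2" using assms by (simp add: add_nonneg_pos)
  then have g2: "g\<^sup>2 = c * z\<^sup>2 + \<beta>\<^sup>2" and g0: "0 < g" by (simp_all add: g_def)
  have "((\<lambda>z. c * z / sqrt (c * z\<^sup>2 + \<beta>\<^sup>2)) has_real_derivative (c * g - c * z * (c * z / g)) / (g * g)) (at z)"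
    using DERIV_divide[OF DERIV_cmult_Id[of c z] sqrt_quadratic_has_derivative[OF assms]] g0
    by (simp add: g_def)
  moreover have "(c * g - c * z * (c * z / g)) / (g * g) = c * \<beta>\<^sup>2 / g ^ 3"
    using g0 g2 by (simp add: field_simps power2_eq_square power3_eq_cube)
  ultimately show ?thesis by (simp add: g_def)
qed

lemma sqrt_quadratic_operator_le:
  fixes c \<beta> y m :: real
  assumes "0 \<le> c" "c \<le> 1" "\<beta> \<noteq> 0" "1 \<le> m"
  defines "g \<equiv> sqrt (c * y\<^sup>2 + \<beta>\<^sup>2)"
  shows "(c * \<beta>\<^sup>2 / g ^ 3) / (1 + (c * y / g)\<^sup>2) + m * (y * (c * y / g) - g) / (y\<^sup>2 + g\<^sup>2)
         \<le> - ((1 - c) * \<beta> ^ 4 / (g * (g\<^sup>2 + c\<^sup>2 * y\<^sup>2) * (y\<^sup>2 + g\<^sup>2)))"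
proof -
  define P where "P = g\<^sup>2 + c\<^sup>2 * y\<^sup>2"
  define Q where "Q = y\<^sup>2 + g\<^sup>2"
  have "0 < c * y\<^sup>2 + \<beta>\<^sup>2" using assms by (simp add: add_nonneg_pos)
  then have g2: "g\<^sup>2 = c * y\<^sup>2 + \<beta>\<^sup>2" and g0: "0 < g" by (simp_all add: g_def)
  have P0: "0 < P" and Q0: "0 < Q" using g0 by (simp_all add: P_def Q_def add_pos_nonneg add_nonneg_pos)
  have curv: "(c * \<beta>\<^sup>2 / g ^ 3) / (1 + (c * y / g)\<^sup>2) = c * \<beta>\<^sup>2 / (g * P)"
    using g0 by (simp add: P_def field_simps power2_eq_square power3_eq_cube)
  have radial: "(y * (c * y / g) - g) / (y\<^sup>2 + g\<^sup>2) = - (\<beta>\<^sup>2 / (g * Q))"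
    using g0 g2 by (simp add: Q_def field_simps power2_eq_square)
  have "\<beta>\<^sup>2 / (g * Q) \<le> m * (\<beta>\<^sup>2 / (g * Q))"
    using mult_right_mono[OF assms(4), of "\<beta>\<^sup>2 / (g * Q)"] g0 Q0 by simp
  moreover have "m * (y * (c * y / g) - g) / (y\<^sup>2 + g\<^sup>2) = - (m * (\<beta>\<^sup>2 / (g * Q)))"
    using radial by (metis times_divide_eq_right mult_minus_right)
  ultimately have "(c * \<beta>\<^sup>2 / g ^ 3) / (1 + (c * y / g)\<^sup>2) + m * (y * (c * y / g) - g) / (y\<^sup>2 + g\<^sup>2)
      \<le> c * \<beta>\<^sup>2 / (g * P) - \<beta>\<^sup>2 / (g * Q)"
    unfolding curv by linarith
  also have "\<dots> = \<beta>\<^sup>2 * (c * Q - P) / (g * P * Q)"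
    using g0 P0 Q0 by (simp add: field_simps)
  also have "c * Q - P = - ((1 - c) * \<beta>\<^sup>2)"
    using g2 by (simp add: P_def Q_def algebra_simps power2_eq_square)
  finally show ?thesis
    by (simp add: P_def Q_def power2_eq_square power4_eq_xxxx mult_ac)
qed

definition gsub_coeff :: "real \<Rightarrow> real \<Rightarrow> real \<Rightarrow> real" where
  "gsub_coeff a binf \<beta> = (a\<^sup>2 - \<beta>\<^sup>2) / (a\<^sup>2 - binf\<^sup>2)"

lemma gsub_eq_sqrt_quadratic: "gsub a binf \<beta> z = sqrt (gsub_coeff a binf \<beta> * z\<^sup>2 + \<beta>\<^sup>2)"
  by (simp add: gsub_def gsub_coeff_def)

lemma gsub_coeff_bounds:
  assumes "0 \<le> binf" "binf \<le> \<beta>" "\<beta> \<le> a" "binf < a"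
  shows "0 \<le> gsub_coeff a binf \<beta>" "gsub_coeff a binf \<beta> \<le> 1"
proof -
  have "binf\<^sup>2 < a\<^sup>2" "binf\<^sup>2 \<le> \<beta>\<^sup>2" "\<beta>\<^sup>2 \<le> a\<^sup>2"
    using assms by (auto intro: power_strict_mono power_mono)
  then show "0 \<le> gsub_coeff a binf \<beta>" "gsub_coeff a binf \<beta> \<le> 1"
    by (simp_all add: gsub_coeff_def)
qed

lemma gsub_pos:
  assumes "0 \<le> gsub_coeff a binf \<beta>" "\<beta> \<noteq> 0"
  shows "0 < gsub a binf \<beta> y"
  using assms by (simp add: gsub_eq_sqrt_quadratic add_nonneg_pos)

lemma gsub_has_space_derivatives:
  assumes "0 \<le> gsub_coeff a binf \<beta>" "\<beta> \<noteq> 0"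
  shows "(gsub a binf \<beta> has_real_derivative gsub_coeff a binf \<beta> * y / gsub a binf \<beta> y) (at y)"
    and "((\<lambda>z. deriv (gsub a binf \<beta>) z) has_real_derivative
           gsub_coeff a binf \<beta> * \<beta>\<^sup>2 / gsub a binf \<beta> y ^ 3) (at y)"
proof -
  have profile: "gsub a binf \<beta> = (\<lambda>z. sqrt (gsub_coeff a binf \<beta> * z\<^sup>2 + \<beta>\<^sup>2))"
    by (simp add: fun_eq_iff gsub_eq_sqrt_quadratic)
  show "(gsub a binf \<beta> has_real_derivative gsub_coeff a binf \<beta> * y / gsub a binf \<beta> y) (at y)"
    unfolding profile by (rule sqrt_quadratic_has_derivative[OF assms])
  show "((\<lambda>z. deriv (gsub a binf \<beta>) z) has_real_derivative
           gsub_coeff a binf \<beta> * \<beta>\<^sup>2 / gsub a binf \<beta> y ^ 3) (at y)"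
    unfolding profile sqrt_quadratic_deriv[OF assms]
    by (rule sqrt_quadratic_has_second_derivative[OF assms])
qed

lemma gsub_range:
  assumes "0 \<le> binf" "binf \<le> \<beta>" "\<beta> \<le> a" "binf < a" and y: "y\<^sup>2 \<le> a\<^sup>2 - binf\<^sup>2"
  shows "\<beta> \<le> gsub a binf \<beta> y" "gsub a binf \<beta> y \<le> a"
    and "a\<^sup>2 - (gsub a binf \<beta> y)\<^sup>2 = (a\<^sup>2 - \<beta>\<^sup>2) * (1 - y\<^sup>2 / (a\<^sup>2 - binf\<^sup>2))"
proof -
  define c where "c = gsub_coeff a binf \<beta>"
  have c: "0 \<le> c" "c \<le> 1" using gsub_coeff_bounds[OF assms(1-4)] by (simp_all add: c_def)
  have A: "binf\<^sup>2 < a\<^sup>2" using assms(1,4) by (simp add: power_strict_mono)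
  have g2: "(gsub a binf \<beta> y)\<^sup>2 = c * y\<^sup>2 + \<beta>\<^sup>2"
    using c by (simp add: gsub_eq_sqrt_quadratic c_def)
  show "a\<^sup>2 - (gsub a binf \<beta> y)\<^sup>2 = (a\<^sup>2 - \<beta>\<^sup>2) * (1 - y\<^sup>2 / (a\<^sup>2 - binf\<^sup>2))"
    by (simp add: g2 c_def gsub_coeff_def algebra_simps)
  have "c * y\<^sup>2 \<le> c * (a\<^sup>2 - binf\<^sup>2)" using c y by (simp add: mult_left_mono)
  also have "\<dots> = a\<^sup>2 - \<beta>\<^sup>2" using A by (simp add: c_def gsub_coeff_def)
  finally have "(gsub a binf \<beta> y)\<^sup>2 \<le> a\<^sup>2" by (simp add: g2)
  then show "gsub a binf \<beta> y \<le> a"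
    by (rule power2_le_imp_le) (use assms(1,4) in linarith)
  show "\<beta> \<le> gsub a binf \<beta> y"
    using c by (simp add: gsub_eq_sqrt_quadratic c_def real_le_rsqrt)
qed

lemma gsub_time_derivative:
  fixes b :: "real \<Rightarrow> real"
  assumes db: "(b has_real_derivative \<beta>') (at t within S)" and g0: "0 < gsub a binf (b t) y"
  shows "((\<lambda>s. gsub a binf (b s) y) has_real_derivative
           b t * (1 - y\<^sup>2 / (a\<^sup>2 - binf\<^sup>2)) * \<beta>' / gsub a binf (b t) y) (at t within S)"
proof -
  define K where "K = y\<^sup>2 / (a\<^sup>2 - binf\<^sup>2)"
  define R where "R x = (a\<^sup>2 - x\<^sup>2) * K + x\<^sup>2" for x
  have g: "gsub a binf x y = sqrt (R x)" for x by (simp add: gsub_def R_def K_def)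
  have R0: "0 < R (b t)" using g0 by (simp add: g)
  have dR: "(R has_real_derivative 2 * b t * (1 - K)) (at (b t))"
    unfolding R_def by (auto intro!: derivative_eq_intros simp: algebra_simps)
  have "((\<lambda>x. sqrt (R x)) has_real_derivative
               inverse (sqrt (R (b t))) / 2 * (2 * b t * (1 - K))) (at (b t))"
    by (rule DERIV_chain2[OF DERIV_real_sqrt[OF R0] dR])
  from DERIV_chain2[OF this db]
  have "((\<lambda>s. sqrt (R (b s))) has_real_derivative
           inverse (sqrt (R (b t))) / 2 * (2 * b t * (1 - K)) * \<beta>') (at t within S)" .
  also have "inverse (sqrt (R (b t))) / 2 * (2 * b t * (1 - K)) * \<beta>'
      = b t * (1 - K) * \<beta>' / sqrt (R (b t))"
    by (simp add: inverse_eq_divide)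
  finally show ?thesis
    unfolding g K_def .
qed

lemma bode_rate_le_profile_bound:
  assumes "0 \<le> k" "1 < binf" "binf < \<beta>" "\<beta> \<le> b0" "b0 < a"
    and y: "y\<^sup>2 \<le> a\<^sup>2 - binf\<^sup>2" and g: "\<beta> \<le> g" "g \<le> a"
    and g_sq: "a\<^sup>2 - g\<^sup>2 = (a\<^sup>2 - \<beta>\<^sup>2) * (1 - y\<^sup>2 / (a\<^sup>2 - binf\<^sup>2))"
    and M: "0 < M" "M \<le> (2 * a\<^sup>2 - binf\<^sup>2)\<^sup>2"
  shows "bode_rate k a b0 binf * (1 - y\<^sup>2 / (a\<^sup>2 - binf\<^sup>2))
         \<le> k * (g - 1) * (a - g) * (\<beta> + binf) / ((a\<^sup>2 - binf\<^sup>2) * M)"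
proof -
  define A where "A = a\<^sup>2 - binf\<^sup>2"
  define W where "W = 2 * a\<^sup>2 - binf\<^sup>2"
  define s where "s = 1 - y\<^sup>2 / A"
  have A0: "0 < A" using assms by (simp add: A_def power_strict_mono)
  have W0: "0 < W" using A0 zero_le_power2[of a] unfolding A_def W_def by linarith
  have s: "0 \<le> s" using y A0 by (simp add: s_def A_def)
  have b0_sq: "b0\<^sup>2 \<le> a\<^sup>2" "\<beta>\<^sup>2 \<le> b0\<^sup>2" using assms by (auto intro: power_mono)
  have rate: "bode_rate k a b0 binf * s
      = (k / A) * ((binf * (binf - 1)) * (((a\<^sup>2 - b0\<^sup>2) * s / a) * (1 / W\<^sup>2)))"
    using A0 W0 assms unfolding bode_rate_def A_def[symmetric] W_def[symmetric]
    by (simp add: field_simps)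
  have e1: "binf * (binf - 1) \<le> ((\<beta> + binf) / 2) * (g - 1)"
    using assms by (intro mult_mono) auto
  have "(a\<^sup>2 - b0\<^sup>2) * s \<le> (a\<^sup>2 - \<beta>\<^sup>2) * s"
    using b0_sq s by (intro mult_right_mono) auto
  also have "\<dots> = (a - g) * (a + g)"
    using g_sq by (simp add: s_def A_def power2_eq_square algebra_simps)
  also have "\<dots> \<le> (a - g) * (2 * a)"
    using g by (intro mult_left_mono) auto
  finally have e2: "(a\<^sup>2 - b0\<^sup>2) * s / a \<le> 2 * (a - g)"
    using assms by (simp add: field_simps)
  have e3: "1 / W\<^sup>2 \<le> 1 / M"
    using M by (simp add: W_def frac_le)
  have "(binf * (binf - 1)) * (((a\<^sup>2 - b0\<^sup>2) * s / a) * (1 / W\<^sup>2))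
      \<le> (((\<beta> + binf) / 2) * (g - 1)) * ((2 * (a - g)) * (1 / M))"
    using assms b0_sq s g by (intro mult_mono e1 e2 e3) auto
  then have "bode_rate k a b0 binf * s \<le> (k / A) * ((((\<beta> + binf) / 2) * (g - 1)) * ((2 * (a - g)) * (1 / M)))"
    unfolding rate using assms A0 by (intro mult_left_mono) auto
  also have "\<dots> = k * (g - 1) * (a - g) * (\<beta> + binf) / (A * M)"
    using A0 M by (simp add: field_simps)
  finally show ?thesis by (simp add: s_def A_def)
qed

lemma gsub_subsolution_at:
  fixes U :: "real \<Rightarrow> real"
  assumes "2 \<le> n" "0 \<le> k" "1 < binf" "binf < \<beta>" "\<beta> \<le> b0" "b0 < a"
    and y: "y\<^sup>2 \<le> a\<^sup>2 - binf\<^sup>2"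
    and U_lower: "\<forall>x\<in>{1..a}. U x \<ge> k * (x - 1) * (a - x)"
  defines "c \<equiv> gsub_coeff a binf \<beta>" and "g \<equiv> gsub a binf \<beta> y"
  shows "0 \<le> \<beta> * (1 - y\<^sup>2 / (a\<^sup>2 - binf\<^sup>2)) * bode_rhs k a b0 binf \<beta> / g
             - U g * ((c * \<beta>\<^sup>2 / g ^ 3) / (1 + (c * y / g)\<^sup>2)
                      + real (n - 1) * (y * (c * y / g) - g) / (y\<^sup>2 + g\<^sup>2))"
proof -
  define A where "A = a\<^sup>2 - binf\<^sup>2"
  define s where "s = 1 - y\<^sup>2 / A"
  define M where "M = (g\<^sup>2 + c\<^sup>2 * y\<^sup>2) * (y\<^sup>2 + g\<^sup>2)"
  define X where "X = (\<beta> - binf) * \<beta> ^ 4 / g"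
  define K where "K = k * (g - 1) * (a - g)"
  have A0: "0 < A" using assms by (simp add: A_def power_strict_mono)
  have c: "0 \<le> c" "c \<le> 1" using gsub_coeff_bounds[of binf \<beta> a] assms by (simp_all add: c_def)
  have g_sqrt: "g = sqrt (c * y\<^sup>2 + \<beta>\<^sup>2)" by (simp add: g_def c_def gsub_eq_sqrt_quadratic)
  have g: "\<beta> \<le> g" "g \<le> a" "a\<^sup>2 - g\<^sup>2 = (a\<^sup>2 - \<beta>\<^sup>2) * (1 - y\<^sup>2 / (a\<^sup>2 - binf\<^sup>2))"
    using gsub_range[of binf \<beta> a y] assms by (simp_all add: g_def)
  have g0: "0 < g" using g assms by linarith
  have M0: "0 < M" using g0 by (simp add: M_def add_pos_nonneg add_nonneg_pos)
  have P_le_Q: "g\<^sup>2 + c\<^sup>2 * y\<^sup>2 \<le> y\<^sup>2 + g\<^sup>2"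
    using c by (simp add: mult_left_le_one_le power_le_one)
  have Q_le_W: "y\<^sup>2 + g\<^sup>2 \<le> 2 * a\<^sup>2 - binf\<^sup>2"
    using y g(2) g0 power_mono[of g a 2] by linarith
  have M_le: "M \<le> (2 * a\<^sup>2 - binf\<^sup>2)\<^sup>2"
    unfolding M_def power2_eq_square[of "2 * a\<^sup>2 - binf\<^sup>2"]
    using P_le_Q Q_le_W zero_le_power2[of y] zero_le_power2[of g]
    by (intro mult_mono) linarith+
  have rate: "bode_rate k a b0 binf * s \<le> K * ((\<beta> + binf) / (A * M))"
    using bode_rate_le_profile_bound[OF _ _ _ _ _ y g M0 M_le] assms
    by (simp add: s_def A_def K_def)
  have operator: "(c * \<beta>\<^sup>2 / g ^ 3) / (1 + (c * y / g)\<^sup>2)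
      + real (n - 1) * (y * (c * y / g) - g) / (y\<^sup>2 + g\<^sup>2) \<le> - ((\<beta> + binf) / (A * M) * X)"
  proof -
    have "1 - c = (\<beta> - binf) * (\<beta> + binf) / A"
      using A0 by (simp add: c_def gsub_coeff_def A_def field_simps power2_eq_square)
    then have "(1 - c) * \<beta> ^ 4 / (g * M) = (\<beta> + binf) / (A * M) * X"
      by (simp add: X_def mult_ac)
    moreover have "\<beta> \<noteq> 0" "1 \<le> real (n - 1)" using assms(1,3,4) by auto
    ultimately show ?thesis
      using sqrt_quadratic_operator_le[of c \<beta> "real (n - 1)" y] c
      by (simp add: g_sqrt[symmetric] M_def mult.assoc)
  qed
  have X0: "0 \<le> X" using assms g0 by (simp add: X_def)
  have K_U: "0 \<le> K" "K \<le> U g"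
    using g assms U_lower by (auto simp: K_def)
  have "U g * ((c * \<beta>\<^sup>2 / g ^ 3) / (1 + (c * y / g)\<^sup>2)
        + real (n - 1) * (y * (c * y / g) - g) / (y\<^sup>2 + g\<^sup>2))
      \<le> U g * (- ((\<beta> + binf) / (A * M) * X))"
    using operator K_U by (intro mult_left_mono) auto
  also have "\<dots> \<le> K * (- ((\<beta> + binf) / (A * M) * X))"
    using K_U X0 A0 M0 assms by (intro mult_right_mono_neg) auto
  also have "\<dots> \<le> - (bode_rate k a b0 binf * s * X)"
    using mult_right_mono[OF rate X0] by (simp add: mult.assoc)
  also have "\<dots> = \<beta> * s * bode_rhs k a b0 binf \<beta> / g"
    by (simp add: X_def bode_rhs_eq_rate power4_eq_xxxx power3_eq_cube)
  finally show ?thesis by (simp add: s_def A_def)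
qed

theorem lemma3p2:
  fixes n :: nat and a k b0 binf T :: real and U b :: "real \<Rightarrow> real"
  assumes "n \<ge> 2" and "a > 1" and "k > 0"
    and U_nonneg: "\<forall>x\<in>{1..a}. U x \<ge> 0"
    and U_lower: "\<forall>x\<in>{1..a}. U x \<ge> k * (x - 1) * (a - x)"
    and "1 < binf" and "binf < b0" and "b0 < a"
    and b_init: "b 0 = b0"
    and b_ode: "\<forall>t\<in>{0..<T}. (b has_real_derivative bode_rhs k a b0 binf (b t)) (at t within {0..<T})"
  shows "\<forall>t\<in>{0..<T}. \<forall>y\<in>{- sqrt (a\<^sup>2 - binf\<^sup>2) .. sqrt (a\<^sup>2 - binf\<^sup>2)}.
           (\<exists>D0. ((\<lambda>s. gsub a binf (b s) y) has_real_derivative D0) (at t within {0..<T}))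
         \<and> (\<forall>D0 D1 D2.
              ((\<lambda>s. gsub a binf (b s) y) has_real_derivative D0) (at t within {0..<T})
            \<longrightarrow> ((\<lambda>z. gsub a binf (b t) z) has_real_derivative D1) (at y)
            \<longrightarrow> ((\<lambda>z. deriv (\<lambda>w. gsub a binf (b t) w) z) has_real_derivative D2) (at y)
            \<longrightarrow> D0 - U (gsub a binf (b t) y) *
                   (D2 / (1 + D1\<^sup>2)
                    + real (n - 1) * (y * D1 - gsub a binf (b t) y) / (y\<^sup>2 + (gsub a binf (b t) y)\<^sup>2)) \<ge> 0)"
proof -
  \<comment> \<open>U_nonneg and a > 1 are implied by U_lower and by 1 < binf < b0 < a.\<close>
  have y_sq: "y\<^sup>2 \<le> a\<^sup>2 - binf\<^sup>2" if "y \<in> {- sqrt (a\<^sup>2 - binf\<^sup>2) .. sqrt (a\<^sup>2 - binf\<^sup>2)}" for y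
    using that by (auto intro: sqrt_ge_absD)
  have b_bounds: "binf < b t" "b t \<le> b0" if "t \<in> {0..<T}" for t
    using bode_solution_bounds[OF _ assms(6-8) b_init b_ode that] assms(3) by simp_all
  have quadratic: "0 \<le> gsub_coeff a binf (b t)" "b t \<noteq> 0" if "t \<in> {0..<T}" for t
    using gsub_coeff_bounds(1)[of binf "b t" a] b_bounds[OF that] assms(6-8) by simp_all
  have time_deriv: "((\<lambda>s. gsub a binf (b s) y) has_real_derivative
      b t * (1 - y\<^sup>2 / (a\<^sup>2 - binf\<^sup>2)) * bode_rhs k a b0 binf (b t) / gsub a binf (b t) y)
      (at t within {0..<T})" if "t \<in> {0..<T}" for t y
    using gsub_time_derivative[OF b_ode[rule_format, OF that] gsub_pos[OF quadratic[OF that]]] .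
  show ?thesis
  proof (intro ballI conjI allI impI)
    fix t y assume "t \<in> {0..<T}"
    then show "\<exists>D0. ((\<lambda>s. gsub a binf (b s) y) has_real_derivative D0) (at t within {0..<T})"
      using time_deriv by blast
  next
    fix t y D0 D1 D2
    assume t: "t \<in> {0..<T}" and y: "y \<in> {- sqrt (a\<^sup>2 - binf\<^sup>2) .. sqrt (a\<^sup>2 - binf\<^sup>2)}"
      and D0: "((\<lambda>s. gsub a binf (b s) y) has_real_derivative D0) (at t within {0..<T})"
      and D1: "((\<lambda>z. gsub a binf (b t) z) has_real_derivative D1) (at y)"
      and D2: "((\<lambda>z. deriv (\<lambda>w. gsub a binf (b t) w) z) has_real_derivative D2) (at y)"
    note space_derivs = gsub_has_space_derivatives[OF quadratic[OF t]]
    have "D0 = b t * (1 - y\<^sup>2 / (a\<^sup>2 - binf\<^sup>2)) * bode_rhs k a b0 binf (b t) / gsub a binf (b t) y"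
      using has_real_derivative_unique_within_Ico[OF D0 time_deriv[OF t] t] .
    moreover have "D1 = gsub_coeff a binf (b t) * y / gsub a binf (b t) y"
      using DERIV_unique[OF D1 space_derivs(1)] .
    moreover have "D2 = gsub_coeff a binf (b t) * (b t)\<^sup>2 / gsub a binf (b t) y ^ 3"
      using DERIV_unique[OF D2 space_derivs(2)] .
    ultimately show "0 \<le> D0 - U (gsub a binf (b t) y) *
        (D2 / (1 + D1\<^sup>2) + real (n - 1) * (y * D1 - gsub a binf (b t) y) / (y\<^sup>2 + (gsub a binf (b t) y)\<^sup>2))"
      using gsub_subsolution_at[OF assms(1) _ assms(6) b_bounds[OF t] assms(8) y_sq[OF y] U_lower] assms(3)
      by simp
  qed
qed

end
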